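(* Let $G$ be a finite abelian group. Let $n \in \mathbb{N}_0$ and let $\overline{\ell}=(\ell_1,\dots, \ell_n) \in \mathbb{N}^n$ with $\ell_{i}< \ell_{i+1}$ for each $i \in [1, n-1]$. For $m \in \mathbb{N}_0$ and $i \in [1,n]$, define recursively \[k_{i}^{\overline{\ell}}(m) = \max\left\{0 , \left \lceil \frac{ m - ( \sum_{j=1}^{i-1} k_j^{\overline{\ell}}(m)\ell_j ) - \mathsf{s}_{\le \ell_{i}}(G) + 1}{\ell_i}\right \rceil \right\}\] and \[k_{n+1}^{\overline{\ell}}(m)= \max \left\{0, \left\lceil \frac{ m - \sum_{j=1}^{n} k_j^{\overline{\ell}}(m)\ell_j }{\mathsf{D}(G)}\right \rceil \right\}.\] (1) For every zero-sum sequence $B$ over $G$, $\max \mathsf{L}(B) \ge \sum_{i=1}^{n+1} k_i^{\overline{\ell}}(|B|)$. (2) Let $k \in \mathbb{N}$ and let $M\in \mathbb{N}$ be maximal such that $\sum_{i=1}^{n+1} k_i^{\overline{\ell}}(M) \le k$. Then $\mathsf{D}_{k}(G)\le M$.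
   Context: A sequence over $G$ is a finite unordered list of elements of $G$ with repetitions allowed; $|S|$ is its length. A zero-sum sequence has terms summing to $0$; a minimal zero-sum sequence is a non-empty zero-sum sequence with no proper non-empty zero-sum subsequence. For a zero-sum sequence $B$, $\mathsf{L}(B)$ is the set of all $t$ such that $B$ is a product of $t$ minimal zero-sum sequences. $\mathsf{D}_k(G)$ is the smallest $\ell$ such that every sequence of length at least $\ell$ has $k$ disjoint non-empty zero-sum subsequences; $\mathsf{D}(G)=\mathsf{D}_1(G)$. For $\ell\in\mathbb{N}$, $\mathsf{s}_{\le \ell}(G)\in\mathbb{N}\cup\{\infty\}$ is the smallest $n$ such that every sequence over $G$ of length at least $n$ has a non-empty zero-sum subsequence of length at most $\ell$. $[a,b]$ denotes the integers between $a$ and $b$. *)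

theory Defs
  imports Complex_Main "HOL-Library.Multiset" "HOL-Library.Extended_Nat"
begin

definition zero_sum :: "'a::ab_group_add multiset \<Rightarrow> bool" where
  "zero_sum S \<longleftrightarrow> sum_mset S = 0"

definition minimal_zero_sum :: "'a::ab_group_add multiset \<Rightarrow> bool" where
  "minimal_zero_sum S \<longleftrightarrow> S \<noteq> {#} \<and> zero_sum S \<and>
     (\<forall>T. T \<subseteq># S \<and> T \<noteq> {#} \<and> T \<noteq> S \<longrightarrow> \<not> zero_sum T)"

definition Lset :: "'a::ab_group_add multiset \<Rightarrow> nat set" where
  "Lset B = {t. \<exists>F :: 'a multiset multiset. sum_mset F = B \<and> size F = t \<and>
                  (\<forall>A\<in>#F. minimal_zero_sum A)}"

definition Dk :: "'a::ab_group_add itself \<Rightarrow> nat \<Rightarrow> nat" where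
  "Dk _ k = (LEAST l. \<forall>S :: 'a multiset. l \<le> size S \<longrightarrow>
      (\<exists>F :: 'a multiset multiset. size F = k \<and> sum_mset F \<subseteq># S \<and>
          (\<forall>A\<in>#F. A \<noteq> {#} \<and> zero_sum A)))"

definition Dav :: "'a::ab_group_add itself \<Rightarrow> nat" where
  "Dav G = Dk G 1"

definition s_le :: "'a::ab_group_add itself \<Rightarrow> nat \<Rightarrow> enat" where
  "s_le _ l = (if \<exists>n. \<forall>S :: 'a multiset. n \<le> size S \<longrightarrow>
                   (\<exists>T. T \<subseteq># S \<and> T \<noteq> {#} \<and> zero_sum T \<and> size T \<le> l)
     then enat (LEAST n. \<forall>S :: 'a multiset. n \<le> size S \<longrightarrow>
                   (\<exists>T. T \<subseteq># S \<and> T \<noteq> {#} \<and> zero_sum T \<and> size T \<le> l))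
     else \<infinity>)"

text \<open>kpart s ls r computes [k_1,...,k_n], where r is the current remainder
  m - sum_{j<i} k_j l_j. If s_{\<le> l_i} = \<infinity> the ceiling is -\<infinity> and k_i = 0.
  nat of an integer realises max{0, -}.\<close>
fun kpart :: "(nat \<Rightarrow> enat) \<Rightarrow> nat list \<Rightarrow> int \<Rightarrow> nat list" where
  "kpart s [] r = []"
| "kpart s (l # ls) r =
     (let k = (case s l of \<infinity> \<Rightarrow> 0
                | enat v \<Rightarrow> nat \<lceil>real_of_int (r - int v + 1) / real l\<rceil>)
      in k # kpart s ls (r - int k * int l))"

definition ktot :: "(nat \<Rightarrow> enat) \<Rightarrow> nat \<Rightarrow> nat list \<Rightarrow> nat \<Rightarrow> nat" where
  "ktot s D ls m =
     (let ks = kpart s ls (int m);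
          rest = int m - (\<Sum>(k, l)\<leftarrow>zip ks ls. int k * int l)
      in sum_list ks + nat \<lceil>real_of_int rest / real D\<rceil>)"

end

theory Submission imports Defs begin

text \<open>Greedy extraction: as long as the unused part of a zero-sum sequence B has at least
  s_{\<le>l}(G) terms, it contains a minimal zero-sum subsequence of length at most l, which can be
  split off. Doing this for l_1, ..., l_n in turn removes k_1 + ... + k_n minimal zero-sum
  subsequences of total length at most the sum of the k_i l_i. The rest is again a zero-sum
  sequence, and each of its factorisations has at least its length divided by D(G) factors,
  because minimal zero-sum sequences have length at most D(G). For the bound on D_k(G), a
  sequence S of length M is completed to a zero-sum sequence of length M + 1 by the term -\<sigma>(S);
  of its more than k minimal factors, all but the one containing the new term lie in S.\<close>

lemma size_sum_mset_le:
  fixes F :: "'a multiset multiset"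
  shows "(\<And>A. A \<in># F \<Longrightarrow> size A \<le> c) \<Longrightarrow> size (sum_mset F) \<le> size F * c"
  by (induction F) (auto simp: add_mono)

lemma size_le_size_sum_mset:
  fixes F :: "'a multiset multiset"
  shows "(\<And>A. A \<in># F \<Longrightarrow> A \<noteq> {#}) \<Longrightarrow> size F \<le> size (sum_mset F)"
proof (induction F)
  case (add A F)
  then have "size F \<le> size (sum_mset F)" and "A \<noteq> {#}" by simp_all
  then show ?case by (simp add: nonempty_has_size)
qed simp

lemma sum_mset_mono_submset:
  fixes F G :: "'a multiset multiset"
  shows "F \<subseteq># G \<Longrightarrow> sum_mset F \<subseteq># sum_mset G"
  by (auto simp: mset_subset_eq_exists_conv)

lemma ex_submset_size:
  assumes "k \<le> size X"
  obtains Y where "Y \<subseteq># X" and "size Y = k"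
proof -
  obtain xs where xs: "mset xs = X" using ex_mset by blast
  have "mset (take k xs) \<subseteq># mset xs"
    by (metis append_take_drop_id mset_append mset_subset_eq_add_left)
  with assms xs show thesis by (intro that[of "mset (take k xs)"]) auto
qed

lemma zero_sum_submset_if_card_le_size:
  fixes S :: "'a::{finite,ab_group_add} multiset"
  assumes "card (UNIV :: 'a set) \<le> size S"
  shows "\<exists>T. T \<subseteq># S \<and> T \<noteq> {#} \<and> zero_sum T"
proof -
  obtain xs where xs: "mset xs = S" using ex_mset by blast
  define prefix_sum where "prefix_sum i = sum_list (take i xs)" for i
  have "\<not> inj_on prefix_sum {0..length xs}"
  proof
    assume "inj_on prefix_sum {0..length xs}"
    then have "card {0..length xs} \<le> card (UNIV :: 'a set)"
      by (intro card_inj_on_le) auto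
    with assms xs show False by auto
  qed
  then obtain a b where ab: "a < b" "b \<le> length xs" "prefix_sum a = prefix_sum b"
    unfolding inj_on_def by (metis atLeastAtMost_iff linorder_neqE_nat)
  define T where "T = mset (drop a (take b xs))"
  have split: "take b xs = take a xs @ drop a (take b xs)"
    using ab by (metis append_take_drop_id less_imp_le_nat min.absorb1 take_take)
  then have "prefix_sum b = prefix_sum a + sum_list (drop a (take b xs))"
    unfolding prefix_sum_def by (metis sum_list_append)
  then have "zero_sum T"
    using ab(3) unfolding T_def zero_sum_def by (simp add: sum_mset_sum_list)
  moreover have "T \<noteq> {#}" using ab T_def by auto
  moreover have "T \<subseteq># S"
  proof -
    have "T \<subseteq># mset (take b xs)"
      unfolding T_def by (subst split) simp
    also have "\<dots> \<subseteq># mset xs"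
      by (metis append_take_drop_id mset_append mset_subset_eq_add_left)
    finally show ?thesis using xs by simp
  qed
  ultimately show ?thesis by blast
qed

lemma zero_sum_submset_if_Dav_le_size:
  fixes S :: "'a::{finite,ab_group_add} multiset"
  assumes "Dav TYPE('a) \<le> size S"
  shows "\<exists>T. T \<subseteq># S \<and> T \<noteq> {#} \<and> zero_sum T"
proof -
  let ?P = "\<lambda>l. \<forall>S :: 'a multiset. l \<le> size S \<longrightarrow>
      (\<exists>F :: 'a multiset multiset. size F = 1 \<and> sum_mset F \<subseteq># S \<and>
          (\<forall>A\<in>#F. A \<noteq> {#} \<and> zero_sum A))"
  have "?P (card (UNIV :: 'a set))"
  proof (intro allI impI)
    fix S :: "'a multiset"
    assume "card (UNIV :: 'a set) \<le> size S"
    then obtain T where "T \<subseteq># S" "T \<noteq> {#}" "zero_sum T"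
      using zero_sum_submset_if_card_le_size by blast
    then show "\<exists>F. size F = 1 \<and> sum_mset F \<subseteq># S \<and> (\<forall>A\<in>#F. A \<noteq> {#} \<and> zero_sum A)"
      by (intro exI[of _ "{#T#}"]) auto
  qed
  then have "?P (Dav TYPE('a))" unfolding Dav_def Dk_def by (rule LeastI)
  with assms obtain F :: "'a multiset multiset" where
    F: "size F = 1" "sum_mset F \<subseteq># S" "\<forall>A\<in>#F. A \<noteq> {#} \<and> zero_sum A"
    by blast
  then obtain T where "F = {#T#}" by (metis size_1_singleton_mset)
  with F show ?thesis by auto
qed

lemma s_le_submset:
  fixes S :: "'a::ab_group_add multiset"
  assumes "s_le TYPE('a) l = enat v" and "v \<le> size S"
  shows "\<exists>T. T \<subseteq># S \<and> T \<noteq> {#} \<and> zero_sum T \<and> size T \<le> l"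
proof -
  let ?P = "\<lambda>n. \<forall>S :: 'a multiset. n \<le> size S \<longrightarrow>
                   (\<exists>T. T \<subseteq># S \<and> T \<noteq> {#} \<and> zero_sum T \<and> size T \<le> l)"
  have ex: "\<exists>n. ?P n"
    using assms(1) unfolding s_le_def by (auto split: if_splits)
  with assms(1) have v_eq: "v = (LEAST n. ?P n)" unfolding s_le_def by simp
  have "?P v" unfolding v_eq by (rule LeastI_ex[OF ex])
  with assms(2) show ?thesis by blast
qed

lemma minimal_zero_sum_submset:
  fixes T :: "'a::ab_group_add multiset"
  shows "T \<noteq> {#} \<Longrightarrow> zero_sum T \<Longrightarrow> \<exists>U. U \<subseteq># T \<and> minimal_zero_sum U"
proof (induction "size T" arbitrary: T rule: less_induct)
  case less
  show ?case
  proof (cases "minimal_zero_sum T")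
    case False
    then obtain T' where T': "T' \<subseteq># T" "T' \<noteq> {#}" "T' \<noteq> T" "zero_sum T'"
      using less.prems unfolding minimal_zero_sum_def by blast
    then have "size T' < size T" by (simp add: mset_subset_size subset_mset.le_neq_trans)
    with less.hyps T' obtain U where "U \<subseteq># T'" "minimal_zero_sum U" by blast
    with T' show ?thesis by (meson subset_mset.order_trans)
  qed blast
qed

lemma size_le_Dav_if_minimal_zero_sum:
  fixes A :: "'a::{finite,ab_group_add} multiset"
  assumes "minimal_zero_sum A"
  shows "size A \<le> Dav TYPE('a)"
proof (rule ccontr)
  assume "\<not> ?thesis"
  from assms obtain a where a: "a \<in># A" unfolding minimal_zero_sum_def by fastforce
  with \<open>\<not> ?thesis\<close> have "Dav TYPE('a) \<le> size (A - {#a#})" by (simp add: size_Diff_singleton)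
  then obtain T where T: "T \<subseteq># A - {#a#}" "T \<noteq> {#}" "zero_sum T"
    using zero_sum_submset_if_Dav_le_size by blast
  then have "T \<subseteq># A" by (meson subset_mset.order_trans diff_subset_eq_self)
  moreover have "T \<noteq> A"
    using T(1) size_mset_mono[OF T(1)] size_Diff1_less[OF a] by auto
  ultimately show False using assms T unfolding minimal_zero_sum_def by blast
qed

lemma zero_sum_sum_mset:
  "(\<And>A. A \<in># F \<Longrightarrow> zero_sum A) \<Longrightarrow> zero_sum (sum_mset F)"
  unfolding zero_sum_def by (induction F) auto

lemma zero_sum_diff:
  "T \<subseteq># S \<Longrightarrow> zero_sum S \<Longrightarrow> zero_sum T \<Longrightarrow> zero_sum (S - T)"
  unfolding zero_sum_def by (metis add_0 add_diff_cancel_left' mset_subset_eq_exists_conv sum_mset.union)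

lemma Lset_nonempty_if_zero_sum:
  fixes S :: "'a::ab_group_add multiset"
  shows "zero_sum S \<Longrightarrow> Lset S \<noteq> {}"
proof (induction "size S" arbitrary: S rule: less_induct)
  case less
  show ?case
  proof (cases "S = {#}")
    case True
    then have "0 \<in> Lset S" unfolding Lset_def by (intro CollectI exI[of _ "{#}"]) auto
    then show ?thesis by blast
  next
    case False
    then obtain U where U: "U \<subseteq># S" "minimal_zero_sum U"
      using minimal_zero_sum_submset less.prems by blast
    then have "size (S - U) < size S"
      using size_mset_mono[OF U(1)] unfolding minimal_zero_sum_def
      by (auto simp: size_Diff_submset nonempty_has_size)
    moreover have "zero_sum (S - U)"
      using U less.prems zero_sum_diff unfolding minimal_zero_sum_def by blast
    ultimately obtain F where "sum_mset F = S - U" "\<forall>A\<in>#F. minimal_zero_sum A"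
      using less.hyps unfolding Lset_def by blast
    with U show ?thesis
      unfolding Lset_def by (auto intro!: exI[of _ "add_mset U F"] simp: subset_mset.add_diff_inverse)
  qed
qed

lemma Lset_subset_atMost_size: "Lset S \<subseteq> {..size S}"
  unfolding Lset_def minimal_zero_sum_def using size_le_size_sum_mset by fastforce

lemma Lset_le_Max: "t \<in> Lset S \<Longrightarrow> t \<le> Max (Lset S)"
  using Lset_subset_atMost_size[of S] by (meson Max_ge finite_atMost finite_subset)

lemma size_le_Lset_mult_Dav:
  fixes S :: "'a::{finite,ab_group_add} multiset"
  shows "t \<in> Lset S \<Longrightarrow> size S \<le> t * Dav TYPE('a)"
  unfolding Lset_def using size_sum_mset_le size_le_Dav_if_minimal_zero_sum by blast

lemma Lset_sum_mset_add:
  assumes "t \<in> Lset S" and "\<forall>A\<in>#F. minimal_zero_sum A"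
  shows "size F + t \<in> Lset (sum_mset F + S)"
proof -
  obtain G where "sum_mset G = S" "size G = t" "\<forall>A\<in>#G. minimal_zero_sum A"
    using assms(1) unfolding Lset_def by blast
  with assms(2) show ?thesis unfolding Lset_def by (auto intro!: exI[of _ "F + G"])
qed

definition kstep :: "(nat \<Rightarrow> enat) \<Rightarrow> nat \<Rightarrow> int \<Rightarrow> nat" where
  "kstep s l r = (case s l of \<infinity> \<Rightarrow> 0 | enat v \<Rightarrow> nat \<lceil>real_of_int (r - int v + 1) / real l\<rceil>)"

text \<open>ktot expressed through the remainder r = m - (k_1 l_1 + ... + k_{i-1} l_{i-1}), which
  makes it recursive in the list of lengths.\<close>

definition ktot_from :: "(nat \<Rightarrow> enat) \<Rightarrow> nat \<Rightarrow> nat list \<Rightarrow> int \<Rightarrow> nat" where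
  "ktot_from s D ls r = sum_list (kpart s ls r) +
     nat \<lceil>real_of_int (r - (\<Sum>(k, l)\<leftarrow>zip (kpart s ls r) ls. int k * int l)) / real D\<rceil>"

lemma ktot_eq_ktot_from: "ktot s D ls m = ktot_from s D ls (int m)"
  by (simp add: ktot_def ktot_from_def Let_def)

lemma ktot_from_Nil: "ktot_from s D [] r = nat \<lceil>real_of_int r / real D\<rceil>"
  by (simp add: ktot_from_def)

lemma ktot_from_Cons:
  "ktot_from s D (l # ls) r = kstep s l r + ktot_from s D ls (r - int (kstep s l r) * int l)"
  by (simp add: ktot_from_def kstep_def Let_def algebra_simps split: enat.split)

lemma mult_less_if_Suc_le_nat_ceiling_divide:
  fixes j l :: nat
  assumes "Suc j \<le> nat \<lceil>real_of_int a / real l\<rceil>"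
  shows "int j * int l < a"
proof -
  have "l > 0" using assms by (cases l) auto
  from assms have "int j < \<lceil>real_of_int a / real l\<rceil>" by (simp add: zless_nat_eq_int_zless)
  then have "real j < real_of_int a / real l" by (simp add: less_ceiling_iff)
  with \<open>l > 0\<close> have "real j * real l < real_of_int a" by (simp add: field_simps)
  then show ?thesis by (metis of_int_less_iff of_int_of_nat_eq of_nat_mult)
qed

lemma nat_ceiling_divide_le:
  fixes t D :: nat
  assumes "r \<le> int t * int D"
  shows "nat \<lceil>real_of_int r / real D\<rceil> \<le> t"
proof (cases "D = 0")
  case False
  from assms have "real_of_int r \<le> real t * real D" by (metis of_int_le_iff of_int_of_nat_eq of_nat_mult)
  with False have "real_of_int r / real D \<le> real t" by (simp add: divide_le_eq)
  then show ?thesis by (simp add: ceiling_le_iff nat_le_iff)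
qed simp

lemma short_minimal_zero_sums_submset:
  fixes S :: "'a::ab_group_add multiset"
  assumes "j \<le> kstep (s_le TYPE('a)) l r" and "r \<le> int (size S)"
  shows "\<exists>F. size F = j \<and> sum_mset F \<subseteq># S \<and> (\<forall>A\<in>#F. minimal_zero_sum A \<and> size A \<le> l)"
  using assms(1)
proof (induction j)
  case 0
  show ?case by (intro exI[of _ "{#}"]) auto
next
  case (Suc j)
  then obtain F where F: "size F = j" "sum_mset F \<subseteq># S" "\<forall>A\<in>#F. minimal_zero_sum A \<and> size A \<le> l"
    by auto
  from Suc.prems obtain v where v: "s_le TYPE('a) l = enat v"
    and "Suc j \<le> nat \<lceil>real_of_int (r - int v + 1) / real l\<rceil>"
    by (cases "s_le TYPE('a) l") (auto simp: kstep_def)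
  from this(2) have "int j * int l < r - int v + 1" by (rule mult_less_if_Suc_le_nat_ceiling_divide)
  moreover have "size (sum_mset F) \<le> j * l" using size_sum_mset_le[of F l] F by auto
  then have "int (size (sum_mset F)) \<le> int j * int l" by (metis of_nat_le_iff of_nat_mult)
  moreover have "int (size (S - sum_mset F)) = int (size S) - int (size (sum_mset F))"
    using F(2) size_mset_mono[OF F(2)] by (simp only: size_Diff_submset of_nat_diff)
  ultimately have "v \<le> size (S - sum_mset F)" using assms(2) by linarith
  then obtain T where T: "T \<subseteq># S - sum_mset F" "T \<noteq> {#}" "zero_sum T" "size T \<le> l"
    using s_le_submset v by blast
  then obtain U where U: "U \<subseteq># T" "minimal_zero_sum U" using minimal_zero_sum_submset by blast
  have "sum_mset (add_mset U F) \<subseteq># T + sum_mset F" using U(1) by simp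
  also have "\<dots> \<subseteq># S" using T(1) F(2) by (simp add: subset_mset.le_diff_conv2)
  finally have "sum_mset (add_mset U F) \<subseteq># S" .
  moreover have "size U \<le> l" using U(1) T(4) size_mset_mono le_trans by blast
  ultimately show ?case using F U by (intro exI[of _ "add_mset U F"]) auto
qed

lemma ktot_from_le_Lset:
  fixes S :: "'a::{finite,ab_group_add} multiset"
  assumes "zero_sum S" and "r \<le> int (size S)"
  shows "\<exists>t\<in>Lset S. ktot_from (s_le TYPE('a)) (Dav TYPE('a)) ls r \<le> t"
  using assms
proof (induction ls arbitrary: S r)
  case Nil
  obtain t where t: "t \<in> Lset S" using Lset_nonempty_if_zero_sum Nil.prems(1) by blast
  with Nil.prems(2) have "r \<le> int t * int (Dav TYPE('a))"
    using size_le_Lset_mult_Dav by (metis of_nat_le_iff of_nat_mult order_trans)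
  with t show ?case unfolding ktot_from_Nil using nat_ceiling_divide_le by blast
next
  case (Cons l ls)
  define k where "k = kstep (s_le TYPE('a)) l r"
  obtain F where F: "size F = k" "sum_mset F \<subseteq># S" "\<forall>A\<in>#F. minimal_zero_sum A \<and> size A \<le> l"
    using short_minimal_zero_sums_submset[OF _ Cons.prems(2)] k_def by blast
  define S' where "S' = S - sum_mset F"
  have S: "S = sum_mset F + S'" using F(2) S'_def by (simp add: subset_mset.add_diff_inverse)
  have "zero_sum S'"
    unfolding S'_def using F Cons.prems(1)
    by (simp add: zero_sum_diff zero_sum_sum_mset minimal_zero_sum_def)
  moreover have "size (sum_mset F) \<le> k * l" using size_sum_mset_le[of F l] F by auto
  then have "int (size (sum_mset F)) \<le> int k * int l" by (metis of_nat_le_iff of_nat_mult)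
  then have "r - int k * int l \<le> int (size S')"
    using Cons.prems(2) arg_cong[OF S, of size] by simp
  ultimately obtain t where t: "t \<in> Lset S'"
    and "ktot_from (s_le TYPE('a)) (Dav TYPE('a)) ls (r - int k * int l) \<le> t"
    using Cons.IH by blast
  moreover have "k + t \<in> Lset S" using Lset_sum_mset_add[OF t] F S by auto
  ultimately show ?case by (intro bexI[of _ "k + t"]) (auto simp: ktot_from_Cons k_def)
qed

lemma ktot_le_Lset:
  fixes B :: "'a::{finite,ab_group_add} multiset"
  assumes "zero_sum B"
  shows "\<exists>t\<in>Lset B. ktot (s_le TYPE('a)) (Dav TYPE('a)) ls (size B) \<le> t"
  using ktot_from_le_Lset[OF assms order_refl] by (simp add: ktot_eq_ktot_from)

lemma Dk_le_if_Lset_gt: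
  assumes "\<And>B :: 'a::ab_group_add multiset. zero_sum B \<Longrightarrow> size B = Suc M \<Longrightarrow> \<exists>t\<in>Lset B. k < t"
  shows "Dk TYPE('a) k \<le> M"
  unfolding Dk_def
proof (rule Least_le, intro allI impI)
  fix S :: "'a multiset"
  assume "M \<le> size S"
  then obtain S0 where S0: "S0 \<subseteq># S" "size S0 = M" by (rule ex_submset_size)
  define g where "g = - sum_mset S0"
  have "zero_sum (add_mset g S0)" and "size (add_mset g S0) = Suc M"
    using S0 by (simp_all add: g_def zero_sum_def)
  then obtain G where G: "sum_mset G = add_mset g S0" "k < size G" "\<forall>A\<in>#G. minimal_zero_sum A"
    using assms unfolding Lset_def by blast
  have "g \<in># sum_mset G" using G(1) by simp
  then obtain A0 where A0: "A0 \<in># G" "g \<in># A0" by auto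
  define G' where "G' = G - {#A0#}"
  have G_eq: "G = add_mset A0 G'" using A0(1) G'_def by simp
  text \<open>The factor A0 contains the added term g, so the remaining factors lie in S0.\<close>
  have "add_mset g S0 = add_mset g (A0 - {#g#} + sum_mset G')"
    using G(1) G_eq A0(2) by (simp add: insert_DiffM)
  then have G'_sub: "sum_mset G' \<subseteq># S0" by simp
  have "k \<le> size G'" using G(2) G_eq by simp
  then obtain F where F: "F \<subseteq># G'" "size F = k" by (rule ex_submset_size)
  have "sum_mset F \<subseteq># S"
    using sum_mset_mono_submset[OF F(1)] G'_sub S0(1) by (meson subset_mset.order_trans)
  moreover have "\<forall>A\<in>#F. A \<noteq> {#} \<and> zero_sum A"
    using F(1) G(3) G_eq unfolding minimal_zero_sum_def by (auto dest: mset_subset_eqD)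
  ultimately show "\<exists>F. size F = k \<and> sum_mset F \<subseteq># S \<and> (\<forall>A\<in>#F. A \<noteq> {#} \<and> zero_sum A)"
    using F(2) by blast
qed

theorem proposition3p2:
  fixes ls :: "nat list"
  assumes "\<forall>l\<in>set ls. 0 < l"
    and "sorted_wrt (<) ls"
  shows "(\<forall>B :: ('a::{finite, ab_group_add}) multiset. zero_sum B \<longrightarrow>
            ktot (s_le TYPE('a)) (Dav TYPE('a)) ls (size B) \<le> Max (Lset B))
       \<and> (\<forall>k M. 1 \<le> k \<longrightarrow> 1 \<le> M \<longrightarrow>
            ktot (s_le TYPE('a)) (Dav TYPE('a)) ls M \<le> k \<longrightarrow>
            (\<forall>M'. 1 \<le> M' \<and> ktot (s_le TYPE('a)) (Dav TYPE('a)) ls M' \<le> k \<longrightarrow> M' \<le> M) \<longrightarrow>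
            Dk TYPE('a) k \<le> M)"
proof (intro conjI allI impI)
  fix B :: "'a multiset"
  assume "zero_sum B"
  then show "ktot (s_le TYPE('a)) (Dav TYPE('a)) ls (size B) \<le> Max (Lset B)"
    using ktot_le_Lset Lset_le_Max le_trans by blast
next
  fix k M :: nat
  assume "\<forall>M'. 1 \<le> M' \<and> ktot (s_le TYPE('a)) (Dav TYPE('a)) ls M' \<le> k \<longrightarrow> M' \<le> M"
  from this[rule_format, of "Suc M"]
  have k_less: "k < ktot (s_le TYPE('a)) (Dav TYPE('a)) ls (Suc M)" by linarith
  show "Dk TYPE('a) k \<le> M"
  proof (rule Dk_le_if_Lset_gt)
    fix B :: "'a multiset"
    assume "zero_sum B" and "size B = Suc M"
    with k_less show "\<exists>t\<in>Lset B. k < t"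
      using ktot_le_Lset[of B ls] less_le_trans by auto
  qed
qed

end
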